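(* Let $D\ge2$. There exists a constant $C>0$ depending only on $D$ such that: if $0<\eta<1$ and $E\subset\mathbb R^D$ is finite with $\mathrm{diam}(E)=1$ and $V_D(E)\leq\eta^D$, then there exists an improper Euclidean motion $\rho$ with $|\rho(z)-z|\leq C\eta$ for all $z\in E$.
   Context: A Euclidean motion is $x\mapsto Tx+x_0$ with $T\in O(D)$; improper if $\det T=-1$. For finite $E$, $V_D(E)$ is the maximum over $z_0,\dots,z_D\in E$ of the $D$-dimensional volume of the simplex with vertices $z_0,\dots,z_D$. *)

theory Defs
  imports "HOL-Analysis.Analysis"
begin

text \<open>D-dimensional volume (Lebesgue measure) of the simplex with vertices
  z0 and z i (i ranging over the D indices of the type 'n).\<close>
definition simplex_vol :: "real^'n \<Rightarrow> ('n \<Rightarrow> real^'n) \<Rightarrow> real" where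
  "simplex_vol z0 z = measure lebesgue (convex hull (insert z0 (range z)))"

definition VD :: "(real^'n) set \<Rightarrow> real" where
  "VD E = Max {simplex_vol z0 z | z0 z. z0 \<in> E \<and> (\<forall>i. z i \<in> E)}"

definition improper_motion :: "(real^'n \<Rightarrow> real^'n) \<Rightarrow> bool" where
  "improper_motion \<rho> \<longleftrightarrow> (\<exists>T x0. orthogonal_matrix T \<and> det T = -1 \<and>
      (\<forall>x. \<rho> x = T *v x + x0))"

end

theory Submission
  imports Defs
begin

text \<open>Fix a \<in> E and choose z_1, \<dots>, z_D \<in> E maximising the volume of the simplex
  a, z_1, \<dots>, z_D, i.e. the modulus of the determinant of the matrix M with columns z_j - a.
  If det M = 0, then E - a lies in a hyperplane. Otherwise, by Cramer's rule and maximality, every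
  x - a with x \<in> E has coordinates of modulus at most 1 in the basis of edges, i.e.
  |N_k \<bullet> (x - a)| \<le> 1 for every row N_k of N = M^-1. Since |det M| \<le> D! \<eta>^D, the determinant
  of N is at least 1 / (D! \<eta>^D), and the Leibniz bound |det N| \<le> D! m^D for the largest row
  norm m gives m \<ge> 1 / ((D!)^2 \<eta>). So E lies in a slab of width O(\<eta>) around a hyperplane
  through a, and the reflection in that hyperplane is an improper motion moving every point of E
  by O(\<eta>).\<close>

lemma abs_det_coordinate_swap:
  fixes m n :: "'n::finite"
  shows "\<bar>det (matrix (\<lambda>v::real^'n. \<chi> i. v $ Transposition.transpose m n i))\<bar> = 1"
proof -
  have "matrix (\<lambda>v::real^'n. \<chi> i. v $ Transposition.transpose m n i)
      = transpose (\<chi> i j. mat 1 $ i $ Transposition.transpose m n j)"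
    by (auto simp: matrix_eq transpose_def axis_def mat_def matrix_def
        eq_commute[of "Transposition.transpose m n _"])
  then show ?thesis
    by (simp add: det_permute_columns permutes_swap_id sign_swap_id abs_mult)
qed

lemma det_shear:
  fixes m n :: "'n::finite"
  assumes "m \<noteq> n"
  shows "det (matrix (\<lambda>v::real^'n. \<chi> i. if i = m then v $ m + v $ n else v $ i)) = 1"
proof -
  have "matrix (\<lambda>v::real^'n. \<chi> i. if i = m then v $ m + v $ n else v $ i)
      = (\<chi> k. if k = m then row m (mat 1) + 1 *s row n (mat 1) else row k (mat 1 :: real^'n^'n))"
    by (auto simp: matrix_def vec_eq_iff row_def mat_def axis_def)
  then show ?thesis
    using det_row_operation[OF assms, of "mat 1 :: real^'n^'n" 1] by (simp add: det_I)
qed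

lemma measure_coordinate_swap_image:
  fixes m n :: "'n::finite" and S :: "(real^'n) set"
  assumes "S \<in> lmeasurable"
  defines "h \<equiv> \<lambda>v::real^'n. \<chi> i. v $ Transposition.transpose m n i"
  shows "h ` S \<in> lmeasurable \<and> measure lebesgue (h ` S) = measure lebesgue S"
proof -
  have "linear h"
    by (rule linearI) (simp_all add: h_def plus_vec_def scaleR_vec_def)
  moreover have "measure lebesgue (h ` cbox a b) = measure lebesgue (cbox a b)" for a b
  proof (cases "cbox a b = {}")
    case False
    have eq: "h ` cbox a b = cbox (h a) (h b)"
      by (auto simp: h_def image_iff lambda_swap_Galois mem_box_cart) (metis transpose_involutory)+
    moreover have "h ` cbox a b \<noteq> {}"
      using False by blast
    ultimately show ?thesis
      using prod.permute [OF permutes_swap_id, where S=UNIV and g="\<lambda>i. (b - a)$i", symmetric]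
      by (simp add: content_cbox_cart h_def False)
  qed simp
  ultimately show ?thesis
    using measure_linear_sufficient[of h S 1] assms by simp
qed

lemma measure_shear_image:
  fixes m n :: "'n::finite" and S :: "(real^'n) set"
  assumes "m \<noteq> n" "S \<in> lmeasurable"
  defines "h \<equiv> \<lambda>v::real^'n. \<chi> i. if i = m then v $ m + v $ n else v $ i"
  shows "h ` S \<in> lmeasurable \<and> measure lebesgue (h ` S) = measure lebesgue S"
proof -
  have "linear h"
    by (rule linearI) (auto simp: h_def algebra_simps plus_vec_def scaleR_vec_def vec_eq_iff)
  moreover have "measure lebesgue (h ` cbox a b) = measure lebesgue (cbox a b)" for a b
  proof (cases "cbox a b = {}")
    case False
    \<comment> \<open>\<open>measure_shear_interval\<close> needs a nonnegative n-th lower corner, so translate first\<close>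
    define v :: "real^'n" where "v = (\<chi> i. if i = n then - a $ n else 0)"
    have "h ` cbox a b = (+) (\<chi> i. if i = m \<or> i = n then a $ n else 0) ` h ` (+) v ` cbox a b"
      using \<open>m \<noteq> n\<close> unfolding image_comp o_def h_def v_def by (force simp: vec_eq_iff)
    then have "measure lebesgue (h ` cbox a b) = measure lebesgue (h ` cbox (v + a) (v + b))"
      by (simp add: measure_translation cbox_translation)
    also have "\<dots> = measure lebesgue (cbox (v + a) (v + b))"
    proof -
      have "cbox (v + a) (v + b) \<noteq> {}"
        by (metis False cbox_translation image_is_empty)
      then show ?thesis
        unfolding h_def using \<open>m \<noteq> n\<close> by (intro measure_shear_interval) (auto simp: v_def)
    qed
    also have "\<dots> = measure lebesgue (cbox a b)"
      by (metis cbox_translation measure_translation)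
    finally show ?thesis .
  qed simp
  ultimately show ?thesis
    using measure_linear_sufficient[of h S 1] assms by simp
qed

text \<open>The library version \<open>measure_linear_image\<close> assumes a well-ordered index type, which it
  uses only to compute the determinant of a shear; \<open>det_shear\<close> avoids this.\<close>

lemma measure_linear_image_finite:
  fixes f :: "real^'n::finite \<Rightarrow> real^'n"
  assumes "linear f" "S \<in> lmeasurable"
  shows "f ` S \<in> lmeasurable \<and> measure lebesgue (f ` S) = \<bar>det (matrix f)\<bar> * measure lebesgue S"
proof -
  let ?P = "\<lambda>f. \<forall>S \<in> lmeasurable.
    f ` S \<in> lmeasurable \<and> measure lebesgue (f ` S) = \<bar>det (matrix f)\<bar> * measure lebesgue S"
  have "?P f"
  proof (rule induct_linear_elementary [OF \<open>linear f\<close>])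
    fix f g :: "real^'n \<Rightarrow> real^'n"
    assume "linear f" "linear g" and f: "?P f" and g: "?P g"
    show "?P (f \<circ> g)"
    proof
      fix S :: "(real^'n) set"
      assume "S \<in> lmeasurable"
      with g have "g ` S \<in> lmeasurable" by blast
      then show "(f \<circ> g) ` S \<in> lmeasurable \<and>
          measure lebesgue ((f \<circ> g) ` S) = \<bar>det (matrix (f \<circ> g))\<bar> * measure lebesgue S"
        using f g \<open>S \<in> lmeasurable\<close> unfolding image_comp [symmetric]
        by (simp add: matrix_compose [OF \<open>linear g\<close> \<open>linear f\<close>] abs_mult det_mul)
    qed
  next
    fix f :: "real^'n \<Rightarrow> real^'n" and i
    assume "linear f" and "\<And>x. f x $ i = 0"
    then have "\<not> inj f"
      by (metis linear_injective_imp_surjective one_neq_zero surjE vec_component)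
    then have "det (matrix f) = 0" and "negligible (f ` S)" for S
      using det_nz_iff_inj[OF \<open>linear f\<close>] negligible_linear_singular_image[OF \<open>linear f\<close>]
      by auto
    then show "?P f"
      by (simp add: negligible_imp_measurable negligible_imp_measure0)
  next
    fix c :: "'n \<Rightarrow> real"
    show "?P (\<lambda>x. \<chi> i. c i * x $ i)"
      by (simp add: measurable_stretch measure_stretch axis_def matrix_def det_diagonal)
  next
    fix m n :: 'n
    show "?P (\<lambda>x. \<chi> i. x $ Transposition.transpose m n i)"
      by (simp add: measure_coordinate_swap_image abs_det_coordinate_swap)
  next
    fix m n :: 'n
    assume "m \<noteq> n"
    then show "?P (\<lambda>x. \<chi> i. if i = m then x $ m + x $ n else x $ i)"
      by (simp add: measure_shear_image det_shear)
  qed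
  with assms show ?thesis
    by blast
qed

definition edge_matrix :: "real^'n \<Rightarrow> ('n \<Rightarrow> real^'n) \<Rightarrow> real^'n^'n::finite" where
  "edge_matrix z0 z = (\<chi> i j. z j $ i - z0 $ i)"

lemma column_edge_matrix: "column j (edge_matrix z0 z) = z j - z0"
  by (simp add: column_def edge_matrix_def vec_eq_iff)

lemma simplex_vol_eq_abs_det:
  fixes z0 :: "real^'n::finite"
  shows "simplex_vol z0 z = \<bar>det (edge_matrix z0 z)\<bar> / fact CARD('n)"
proof -
  define g where "g = (\<lambda>x. edge_matrix z0 z *v x)"
  define std :: "(real^'n) set" where "std = convex hull insert 0 Basis"
  have "compact std"
    unfolding std_def by (intro finite_imp_compact_convex_hull) auto
  have "convex hull (insert z0 (range z)) = (+) z0 ` (convex hull (insert 0 ((\<lambda>x. x - z0) ` range z)))"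
    by (simp add: convex_hull_translation [symmetric] image_image)
  also have "insert 0 ((\<lambda>x. x - z0) ` range z) = g ` insert 0 Basis"
    by (auto simp: g_def Basis_vec_def image_iff matrix_vector_mult_basis column_edge_matrix)
  also have "convex hull (g ` insert 0 Basis) = g ` std"
    unfolding std_def by (rule convex_hull_linear_image [symmetric]) (auto simp: g_def)
  finally have "simplex_vol z0 z = measure lebesgue (g ` std)"
    by (simp add: simplex_vol_def measure_translation)
  also have "\<dots> = \<bar>det (edge_matrix z0 z)\<bar> * measure lebesgue std"
    using measure_linear_image_finite[of g std] \<open>compact std\<close>
    by (simp add: g_def lmeasurable_compact)
  also have "measure lebesgue std = 1 / fact CARD('n)"
    using \<open>compact std\<close> content_std_simplex[where 'a="real^'n"]
    by (simp add: std_def measure_completion compact_imp_closed)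
  finally show ?thesis
    by simp
qed

lemma simplex_vol_le_VD:
  assumes "finite E" "z0 \<in> E" "\<forall>i. z i \<in> E"
  shows "simplex_vol z0 z \<le> VD E"
proof -
  have "{simplex_vol z0 z | z0 z. z0 \<in> E \<and> (\<forall>i. z i \<in> E)}
      = (\<lambda>(z0, z). simplex_vol z0 z) ` (E \<times> PiE UNIV (\<lambda>_. E))"
    by (auto simp: PiE_def Pi_def image_iff)
  moreover have "finite (E \<times> PiE (UNIV :: 'a set) (\<lambda>_. E))"
    using assms(1) by (simp add: finite_PiE)
  ultimately show ?thesis
    unfolding VD_def using assms by (intro Max_ge) auto
qed

lemma abs_det_le_fact_mult_power:
  fixes N :: "real^'n::finite^'n"
  assumes "\<And>i j. \<bar>N $ i $ j\<bar> \<le> m"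
  shows "\<bar>det N\<bar> \<le> fact CARD('n) * m ^ CARD('n)"
proof -
  have "\<bar>det N\<bar> \<le> (\<Sum>p\<in>{p. p permutes UNIV}. \<bar>of_int (sign p) * (\<Prod>i\<in>UNIV. N $ i $ p i)\<bar>)"
    unfolding det_def by (rule sum_abs)
  also have "\<dots> \<le> (\<Sum>p\<in>{p. p permutes (UNIV :: 'n set)}. m ^ CARD('n))"
  proof (rule sum_mono)
    fix p :: "'n \<Rightarrow> 'n"
    have "\<bar>of_int (sign p) * (\<Prod>i\<in>UNIV. N $ i $ p i)\<bar> = (\<Prod>i\<in>UNIV. \<bar>N $ i $ p i\<bar>)"
      by (simp add: abs_mult sign_def abs_prod)
    also have "\<dots> \<le> (\<Prod>i\<in>(UNIV :: 'n set). m)"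
      by (rule prod_mono) (use assms in auto)
    finally show "\<bar>of_int (sign p) * (\<Prod>i\<in>UNIV. N $ i $ p i)\<bar> \<le> m ^ CARD('n)"
      by simp
  qed
  also have "\<dots> = fact CARD('n) * m ^ CARD('n)"
    by (simp add: card_permutations)
  finally show ?thesis .
qed

lemma edge_matrix_det_eq_0_imp_hyperplane:
  fixes a :: "real^'n::finite"
  assumes "finite E" and singular: "\<And>z. \<forall>i. z i \<in> E \<Longrightarrow> det (edge_matrix a z) = 0"
  shows "\<exists>u. norm u = 1 \<and> (\<forall>x\<in>E. u \<bullet> (x - a) = 0)"
proof -
  define S where "S = (\<lambda>x. x - a) ` E"
  have "dim S < CARD('n)"
  proof (rule ccontr)
    assume "\<not> dim S < CARD('n)"
    then have "dim S = CARD('n)"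
      using dim_subset_UNIV_cart[of S] by simp
    then obtain B where B: "B \<subseteq> S" "independent B" "card B = CARD('n)"
      using basis_exists[of S] by metis
    then obtain g where g: "bij_betw g (UNIV :: 'n set) B"
      using finite_same_card_bij[of "UNIV :: 'n set" B] finite_subset[of B S] \<open>finite E\<close> S_def
      by auto
    define z where "z = (\<lambda>j. g j + a)"
    have "\<forall>i. z i \<in> E"
    proof
      fix i
      have "g i \<in> S"
        using g B(1) by (auto simp: bij_betw_def)
      then show "z i \<in> E"
        by (auto simp: z_def S_def)
    qed
    moreover have "det (edge_matrix a z) \<noteq> 0"
    proof -
      have "columns (edge_matrix a z) = range g"
        by (simp add: columns_def column_edge_matrix z_def full_SetCompr_eq)
      then have "rank (edge_matrix a z) = CARD('n)"
        using g B by (simp add: column_rank_def bij_betw_def dim_eq_card_independent)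
      then show ?thesis
        using det_nz_iff_inj[OF matrix_vector_mul_linear, of "edge_matrix a z"]
        by (simp add: full_rank_injective)
    qed
    ultimately show False
      using singular by blast
  qed
  then obtain w where w: "w \<noteq> 0" "\<And>y. y \<in> span S \<Longrightarrow> orthogonal w y"
    using orthogonal_to_subspace_exists[of S] by auto
  then have "norm (w /\<^sub>R norm w) = 1 \<and> (\<forall>x\<in>E. (w /\<^sub>R norm w) \<bullet> (x - a) = 0)"
    by (auto simp: S_def orthogonal_def intro: span_base)
  then show ?thesis ..
qed

lemma maximal_edge_det_imp_abs_coordinate_le_1:
  fixes a :: "real^'n::finite"
  assumes maximal: "\<bar>det (edge_matrix a (z(k := x)))\<bar> \<le> \<bar>det (edge_matrix a z)\<bar>"
    and N: "edge_matrix a z ** N = mat 1" and nonsingular: "det (edge_matrix a z) \<noteq> 0"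
  shows "\<bar>N $ k \<bullet> (x - a)\<bar> \<le> 1"
proof -
  define M where "M = edge_matrix a z"
  define c where "c = N *v (x - a)"
  have "M *v c = x - a"
    using N by (simp add: M_def c_def matrix_vector_mul_assoc)
  then have "edge_matrix a (z(k := x)) = (\<chi> i j. if j = k then (M *v c) $ i else M $ i $ j)"
    by (simp add: M_def edge_matrix_def vec_eq_iff)
  then have "\<bar>c $ k\<bar> * \<bar>det M\<bar> \<le> \<bar>det M\<bar>"
    using maximal by (simp add: cramer_lemma abs_mult M_def)
  then have "\<bar>c $ k\<bar> \<le> 1"
    using nonsingular by (simp add: M_def)
  then show ?thesis
    by (simp add: c_def matrix_vector_mul_component)
qed

lemma one_le_mult_power_imp_one_le_mult:
  fixes c t :: real
  assumes "1 \<le> c * t ^ n" "1 \<le> c" "0 \<le> t" "1 \<le> n"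
  shows "1 \<le> c * t"
proof (cases "t \<le> 1")
  case True
  then have "t ^ n \<le> t"
    using power_decreasing[of 1 n t] assms(3,4) by simp
  with assms(1,2) show ?thesis
    by (smt (verit) mult_left_mono)
next
  case False
  with assms(2) show ?thesis
    by (smt (verit) mult_le_cancel_right1)
qed

lemma exists_reflection:
  fixes u a :: "real^'n::finite"
  assumes u: "norm u = 1"
  shows "\<exists>\<rho>. improper_motion \<rho> \<and> (\<forall>x. norm (\<rho> x - x) = 2 * \<bar>u \<bullet> (x - a)\<bar>)"
proof -
  obtain k :: 'n where True by simp
  obtain A where A: "orthogonal_matrix A" and Ak: "A *v axis k 1 = u"
    using orthogonal_matrix_exists_basis[OF u] by metis
  \<comment> \<open>conjugate the reflection in the k-th coordinate hyperplane into the hyperplane orthogonal to u\<close>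
  define R :: "real^'n^'n" where "R = (\<chi> i j. if i = j then (if i = k then -1 else 1) else 0)"
  define T where "T = A ** R ** transpose A"
  have "det R = -1"
    by (subst det_diagonal) (auto simp: R_def prod.remove[of UNIV k])
  moreover have "orthogonal_matrix R"
    by (auto simp: orthogonal_matrix_def R_def matrix_matrix_mult_def transpose_def mat_def vec_eq_iff
        if_distrib[of "\<lambda>x. x * _"] sum.delta cong: if_cong)
  moreover have "det A * det A = 1"
    using det_orthogonal_matrix[OF A] by auto
  ultimately have T: "orthogonal_matrix T" "det T = -1"
    unfolding T_def using A
    by (simp_all add: orthogonal_matrix_mul orthogonal_matrix_transpose det_mul det_transpose)
  have reflect: "T *v y - y = (- 2 * (u \<bullet> y)) *\<^sub>R u" for y
  proof -
    define w where "w = transpose A *v y"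
    have y: "y = A *v w"
      using A unfolding w_def orthogonal_matrix_def
      by (metis matrix_vector_mul_assoc matrix_vector_mul_lid)
    have "T *v y = A *v (R *v w)"
      by (simp only: T_def w_def matrix_vector_mul_assoc matrix_mul_assoc)
    also have "R *v w = w + (- 2 * w $ k) *\<^sub>R axis k 1"
      by (auto simp: R_def vec_eq_iff matrix_vector_mult_def axis_def if_distrib[of "\<lambda>x. x * _"]
          sum.delta cong: if_cong)
    also have "A *v (w + c *\<^sub>R axis k 1) = y + c *\<^sub>R u" for c
      by (simp add: matrix_vector_right_distrib matrix_vector_mult_scaleR Ak y)
    finally have "T *v y = y + (- 2 * w $ k) *\<^sub>R u" .
    moreover have "u \<bullet> y = axis k 1 \<bullet> w"
    proof -
      have "orthogonal_transformation ((*v) A)"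
        using A by (simp add: orthogonal_transformation_matrix matrix_vector_mul_linear)
      then show ?thesis
        by (simp add: Ak [symmetric] y orthogonal_transformation_def)
    qed
    ultimately show ?thesis
      by (simp add: inner_axis' algebra_simps)
  qed
  define \<rho> where "\<rho> x = T *v x + (a - T *v a)" for x
  have "improper_motion \<rho>"
    unfolding improper_motion_def \<rho>_def using T by blast
  moreover have "\<rho> x - x = T *v (x - a) - (x - a)" for x
    by (simp add: \<rho>_def matrix_vector_mult_diff_distrib)
  ultimately show ?thesis
    using reflect u by auto
qed

lemma exists_maximal_abs_det_edge_matrix:
  fixes a :: "real^'n::finite"
  assumes "finite E" "E \<noteq> {}"
  obtains z where "\<forall>i. z i \<in> E"
    "\<And>z'. \<forall>i. z' i \<in> E \<Longrightarrow> \<bar>det (edge_matrix a z')\<bar> \<le> \<bar>det (edge_matrix a z)\<bar>"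
proof -
  define f where "f z = \<bar>det (edge_matrix a z)\<bar>" for z
  let ?Z = "PiE (UNIV :: 'n set) (\<lambda>_. E)"
  have "finite ?Z" "?Z \<noteq> {}"
    using assms by (simp_all add: finite_PiE PiE_eq_empty_iff)
  then obtain z where "z \<in> ?Z" "f z = Max (f ` ?Z)"
    by (metis (no_types, lifting) Max_in finite_imageI image_iff image_is_empty)
  moreover have "z' \<in> ?Z \<longleftrightarrow> (\<forall>i. z' i \<in> E)" for z'
    by (simp add: PiE_iff extensional_def)
  ultimately show ?thesis
    using that \<open>finite ?Z\<close> by (simp add: f_def)
qed

lemma maximal_simplex_imp_slab:
  fixes a :: "real^'n::finite" and \<eta> :: real
  assumes "finite E" and z: "\<forall>i. z i \<in> E"
    and maximal: "\<And>z'. \<forall>i. z' i \<in> E \<Longrightarrow> \<bar>det (edge_matrix a z')\<bar> \<le> \<bar>det (edge_matrix a z)\<bar>"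
    and small: "\<bar>det (edge_matrix a z)\<bar> \<le> fact CARD('n) * \<eta> ^ CARD('n)" and "0 < \<eta>"
  shows "\<exists>u. norm u = 1 \<and> (\<forall>x\<in>E. \<bar>u \<bullet> (x - a)\<bar> \<le> (fact CARD('n))\<^sup>2 * \<eta>)"
proof (cases "det (edge_matrix a z) = 0")
  case True
  have "det (edge_matrix a z') = 0" if "\<forall>i. z' i \<in> E" for z'
    using maximal[OF that] True by simp
  then obtain u where "norm u = 1" "\<forall>x\<in>E. u \<bullet> (x - a) = 0"
    using edge_matrix_det_eq_0_imp_hyperplane[OF \<open>finite E\<close>] by blast
  with \<open>0 < \<eta>\<close> show ?thesis
    by auto
next
  case False
  define F :: real where "F = fact CARD('n)"
  obtain N where N: "edge_matrix a z ** N = mat 1"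
    using False invertible_det_nz[of "edge_matrix a z"] by (auto simp: invertible_def)
  have "Max (range (\<lambda>i. norm (N $ i))) \<in> range (\<lambda>i. norm (N $ i))"
    by (intro Max_in) auto
  then obtain k where "norm (N $ k) = Max (range (\<lambda>i. norm (N $ i)))"
    by (metis imageE)
  then have k: "norm (N $ i) \<le> norm (N $ k)" for i
    by simp
  define m where "m = norm (N $ k)"
  have det_N: "\<bar>det N\<bar> \<le> F * m ^ CARD('n)"
    unfolding F_def m_def
    by (rule abs_det_le_fact_mult_power) (meson component_le_norm_cart k order.trans)
  \<comment> \<open>det N = 1 / det M is large, so some row of N is long\<close>
  have "1 = \<bar>det (edge_matrix a z)\<bar> * \<bar>det N\<bar>"
    using arg_cong[OF N, of det] by (simp add: det_mul abs_mult [symmetric])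
  also have "\<dots> \<le> (F * \<eta> ^ CARD('n)) * (F * m ^ CARD('n))"
    using small det_N \<open>0 < \<eta>\<close> unfolding F_def by (intro mult_mono) auto
  also have "\<dots> = F\<^sup>2 * (m * \<eta>) ^ CARD('n)"
    by (simp add: power2_eq_square power_mult_distrib)
  finally have "1 \<le> F\<^sup>2 * (m * \<eta>) ^ CARD('n)" .
  moreover have "1 \<le> F\<^sup>2"
    by (simp add: F_def one_le_power)
  moreover have "0 \<le> m * \<eta>"
    using \<open>0 < \<eta>\<close> by (simp add: m_def)
  ultimately have "1 \<le> F\<^sup>2 * (m * \<eta>)"
    by (rule one_le_mult_power_imp_one_le_mult) (simp add: Suc_le_eq)
  then have "m > 0"
    using \<open>0 \<le> m * \<eta>\<close> \<open>0 < \<eta>\<close> by (cases "m = 0") (simp_all add: m_def)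
  with \<open>1 \<le> F\<^sup>2 * (m * \<eta>)\<close> have inv_m: "1 / m \<le> F\<^sup>2 * \<eta>"
    by (simp add: divide_le_eq mult_ac)
  have "\<bar>(N $ k /\<^sub>R m) \<bullet> (x - a)\<bar> \<le> F\<^sup>2 * \<eta>" if "x \<in> E" for x
  proof -
    have "\<forall>i. (z(k := x)) i \<in> E"
      using that z by simp
    then have "\<bar>N $ k \<bullet> (x - a)\<bar> \<le> 1"
      by (rule maximal_edge_det_imp_abs_coordinate_le_1[OF maximal N False])
    then have "\<bar>(N $ k /\<^sub>R m) \<bullet> (x - a)\<bar> \<le> 1 / m"
      using \<open>m > 0\<close> by (simp add: abs_mult divide_inverse abs_of_pos mult_left_le)
    with inv_m show ?thesis
      by linarith
  qed
  moreover have "norm (N $ k /\<^sub>R m) = 1"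
    using \<open>m > 0\<close> by (simp add: m_def)
  ultimately show ?thesis
    unfolding F_def by blast
qed

theorem lemma3p6:
  assumes "CARD('n::finite) \<ge> 2"
  shows "\<exists>C>0. \<forall>(\<eta>::real) (E::(real^'n) set).
           0 < \<eta> \<and> \<eta> < 1 \<and> finite E \<and> diameter E = 1 \<and> VD E \<le> \<eta> ^ CARD('n) \<longrightarrow>
           (\<exists>\<rho>. improper_motion \<rho> \<and> (\<forall>z\<in>E. norm (\<rho> z - z) \<le> C * \<eta>))"
proof (intro exI[of _ "2 * (fact CARD('n))\<^sup>2"] conjI allI impI)
  fix \<eta> :: real and E :: "(real^'n) set"
  assume "0 < \<eta> \<and> \<eta> < 1 \<and> finite E \<and> diameter E = 1 \<and> VD E \<le> \<eta> ^ CARD('n)"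
  then have "0 < \<eta>" "finite E" "E \<noteq> {}" "VD E \<le> \<eta> ^ CARD('n)"
    by auto
  then obtain a where "a \<in> E"
    by blast
  obtain z where z: "\<forall>i. z i \<in> E"
    and maximal: "\<And>z'. \<forall>i. z' i \<in> E \<Longrightarrow> \<bar>det (edge_matrix a z')\<bar> \<le> \<bar>det (edge_matrix a z)\<bar>"
    using exists_maximal_abs_det_edge_matrix[OF \<open>finite E\<close> \<open>E \<noteq> {}\<close>] by blast
  have "\<bar>det (edge_matrix a z)\<bar> / fact CARD('n) \<le> \<eta> ^ CARD('n)"
    using simplex_vol_le_VD[OF \<open>finite E\<close> \<open>a \<in> E\<close> z] \<open>VD E \<le> _\<close>
    by (simp add: simplex_vol_eq_abs_det)
  then have "\<bar>det (edge_matrix a z)\<bar> \<le> fact CARD('n) * \<eta> ^ CARD('n)"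
    by (simp add: divide_le_eq mult.commute)
  then obtain u where "norm u = 1" and u: "\<forall>x\<in>E. \<bar>u \<bullet> (x - a)\<bar> \<le> (fact CARD('n))\<^sup>2 * \<eta>"
    using maximal_simplex_imp_slab[OF \<open>finite E\<close> z maximal _ \<open>0 < \<eta>\<close>] by blast
  then obtain \<rho> where "improper_motion \<rho>" "\<forall>x. norm (\<rho> x - x) = 2 * \<bar>u \<bullet> (x - a)\<bar>"
    using exists_reflection by blast
  with u show "\<exists>\<rho>. improper_motion \<rho> \<and> (\<forall>x\<in>E. norm (\<rho> x - x) \<le> 2 * (fact CARD('n))\<^sup>2 * \<eta>)"
    by force
qed simp

end
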